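(* Let $A=\begin{pmatrix} a & b\\ c & d\end{pmatrix}$ be a $2\times 2$ matrix with positive rational entries. The alternate minimization limit $S(A)$ of $A$ has rational entries if and only if $ad/(bc)$ is the square of a rational number.
   Context: For an $n\times n$ matrix $A=(a_{i,j})$ let $\mathrm{row}_i(A)=\sum_j a_{i,j}$ and $\mathrm{col}_j(A)=\sum_i a_{i,j}$. For a matrix $A$ with positive entries let $X(A)=\mathrm{diag}(1/\mathrm{row}_1(A),\ldots,1/\mathrm{row}_n(A))$ and $Y(A)=\mathrm{diag}(1/\mathrm{col}_1(A),\ldots,1/\mathrm{col}_n(A))$. The alternate minimization sequence of $A$ is defined by $A^{(0)}=A$, $A^{(2k+1)}=A^{(2k)}\,Y(A^{(2k)})$ and $A^{(2k+2)}=X(A^{(2k+1)})\,A^{(2k+1)}$ for $k\ge 0$; for positive matrices this sequence converges, and its limit $S(A)=\lim_{\ell\to\infty}A^{(\ell)}$ (a doubly stochastic matrix, i.e. all row and column sums equal $1$) is called the alternate minimization limit of $A$. *)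

theory Defs
  imports "HOL-Analysis.Analysis"
begin

definition row_sum :: "real^'n^'n \<Rightarrow> 'n \<Rightarrow> real" where
  "row_sum A i = (\<Sum>j\<in>UNIV. A $ i $ j)"

definition col_sum :: "real^'n^'n \<Rightarrow> 'n \<Rightarrow> real" where
  "col_sum A j = (\<Sum>i\<in>UNIV. A $ i $ j)"

definition diag_mat :: "('n \<Rightarrow> real) \<Rightarrow> real^'n^'n" where
  "diag_mat f = (\<chi> i j. if i = j then f i else 0)"

definition Xmat :: "real^'n^'n \<Rightarrow> real^'n^'n" where
  "Xmat A = diag_mat (\<lambda>i. 1 / row_sum A i)"

definition Ymat :: "real^'n^'n \<Rightarrow> real^'n^'n" where
  "Ymat A = diag_mat (\<lambda>j. 1 / col_sum A j)"

fun alt_min_seq :: "real^'n^'n \<Rightarrow> nat \<Rightarrow> real^'n^'n" where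
  "alt_min_seq A 0 = A"
| "alt_min_seq A (Suc l) =
     (if even l then alt_min_seq A l ** Ymat (alt_min_seq A l)
      else Xmat (alt_min_seq A l) ** alt_min_seq A l)"

definition alt_min_limit :: "real^'n^'n \<Rightarrow> real^'n^'n" where
  "alt_min_limit A = lim (alt_min_seq A)"

definition mat2 :: "real \<Rightarrow> real \<Rightarrow> real \<Rightarrow> real \<Rightarrow> real^2^2" where
  "mat2 a b c d = (\<chi> i j. if i = 1 then (if j = 1 then a else b) else (if j = 1 then c else d))"

end

theory Submission
  imports Defs "HOL-Probability.Characteristic_Functions"
begin

(* One column and one row normalisation turn a positive matrix A into the row normalisation of
   A diag(v) for positive column weights v, so the even iterates of the alternate minimization are
   determined by a sequence of weights.  For a 2 x 2 matrix only the ratio r = v_2 / v_1 matters,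
   and a double step maps r to the Moebius transform (2ac + (ad + bc) r) / ((ad + bc) + 2bd r).
   Its positive fixed point s satisfies bd s^2 = ac, and the quantity (r - s) / (r + s) is
   multiplied at every step by a constant of modulus < 1, so r tends to s.  Consequently S(A) is
   the doubly stochastic matrix with diagonal entries t / (1 + t) and off-diagonal entries
   1 / (1 + t), where t = sqrt (ad / (bc)), and it is rational exactly when t is. *)

abbreviation row_normalize :: "real^'n^'n \<Rightarrow> real^'n^'n" where
  "row_normalize A \<equiv> Xmat A ** A"

abbreviation col_normalize :: "real^'n^'n \<Rightarrow> real^'n^'n" where
  "col_normalize A \<equiv> A ** Ymat A"

lemma diag_mat_mult_nth: "(diag_mat u ** M) $ i $ j = u i * M $ i $ j"
  by (simp add: matrix_matrix_mult_def diag_mat_def if_distrib[of "\<lambda>x. x * _"] cong: if_cong)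

lemma mult_diag_mat_nth: "(M ** diag_mat v) $ i $ j = M $ i $ j * v j"
  by (simp add: matrix_matrix_mult_def diag_mat_def if_distrib cong: if_cong)

lemma diag_mat_mult_diag_mat: "diag_mat u ** diag_mat v = diag_mat (\<lambda>i. u i * v i)"
  by (simp add: vec_eq_iff mult_diag_mat_nth) (simp add: diag_mat_def)

lemma row_normalize_nth: "row_normalize A $ i $ j = A $ i $ j / row_sum A i"
  by (simp add: Xmat_def diag_mat_mult_nth)

lemma col_normalize_nth: "col_normalize A $ i $ j = A $ i $ j / col_sum A j"
  by (simp add: Ymat_def mult_diag_mat_nth)

lemma row_sum_diag_mat_mult: "row_sum (diag_mat u ** M) i = u i * row_sum M i"
  by (simp add: row_sum_def diag_mat_mult_nth sum_distrib_left)

lemma row_normalize_diag_mat_mult: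
  assumes "\<And>i. u i \<noteq> 0"
  shows "row_normalize (diag_mat u ** M) = row_normalize M"
  using assms by (simp add: vec_eq_iff row_normalize_nth row_sum_diag_mat_mult diag_mat_mult_nth)

lemma row_normalize_col_normalize_row_normalize:
  fixes A :: "real^'n^'n"
  assumes "\<And>i. row_sum (A ** diag_mat v) i \<noteq> 0"
  defines "E \<equiv> row_normalize (A ** diag_mat v)"
  shows "row_normalize (col_normalize E) = row_normalize (A ** diag_mat (\<lambda>j. v j / col_sum E j))"
proof -
  have "col_normalize E
      = diag_mat (\<lambda>i. 1 / row_sum (A ** diag_mat v) i) ** (A ** diag_mat (\<lambda>j. v j / col_sum E j))"
    by (simp add: E_def Xmat_def Ymat_def matrix_mul_assoc[symmetric] diag_mat_mult_diag_mat)
  then show ?thesis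
    using assms by (simp add: row_normalize_diag_mat_mult)
qed

lemma row_sum_pos: "(\<And>i j. A $ i $ j > 0) \<Longrightarrow> row_sum A i > 0"
  unfolding row_sum_def by (simp add: sum_pos)

lemma col_sum_pos: "(\<And>i j. A $ i $ j > 0) \<Longrightarrow> col_sum A j > 0"
  unfolding col_sum_def by (simp add: sum_pos)

lemma row_normalize_pos:
  "(\<And>i j. A $ i $ j > 0) \<Longrightarrow> row_normalize A $ i $ j > 0"
  by (simp add: row_normalize_nth row_sum_pos)

lemma mult_diag_mat_pos:
  "(\<And>i j. A $ i $ j > 0) \<Longrightarrow> (\<And>j. v j > 0) \<Longrightarrow> (A ** diag_mat v) $ i $ j > 0"
  by (simp add: mult_diag_mat_nth)

fun col_scaling :: "real^'n^'n \<Rightarrow> nat \<Rightarrow> 'n \<Rightarrow> real" where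
  "col_scaling A 0 = (\<lambda>j. 1 / col_sum A j)"
| "col_scaling A (Suc k) =
     (\<lambda>j. col_scaling A k j / col_sum (row_normalize (A ** diag_mat (col_scaling A k))) j)"

lemma col_scaling_pos:
  assumes "\<And>i j. A $ i $ j > 0"
  shows "col_scaling A k j > 0"
proof (induction k arbitrary: j)
  case 0
  show ?case using col_sum_pos[OF assms] by simp
next
  case (Suc k)
  have "col_sum (row_normalize (A ** diag_mat (col_scaling A k))) j > 0"
    by (intro col_sum_pos row_normalize_pos mult_diag_mat_pos assms Suc.IH)
  then show ?case using Suc.IH by simp
qed

lemma alt_min_seq_Suc_even: "alt_min_seq A (2 * k + 1) = col_normalize (alt_min_seq A (2 * k))"
  by simp

lemma alt_min_seq_Suc_odd: "alt_min_seq A (2 * k + 2) = row_normalize (alt_min_seq A (2 * k + 1))"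
  using alt_min_seq.simps(2)[of A "2 * k + 1"] by (simp del: alt_min_seq.simps)

lemma alt_min_seq_even_col_scaling:
  assumes "\<And>i j. A $ i $ j > 0"
  shows "alt_min_seq A (2 * k + 2) = row_normalize (A ** diag_mat (col_scaling A k))"
proof (induction k)
  case 0
  show ?case using alt_min_seq_Suc_odd[of A 0] by (simp add: Ymat_def)
next
  case (Suc k)
  have "alt_min_seq A (2 * Suc k + 2) = row_normalize (col_normalize (alt_min_seq A (2 * k + 2)))"
    using alt_min_seq_Suc_odd[of A "Suc k"] alt_min_seq_Suc_even[of A "Suc k"] by simp
  also have "\<dots> = row_normalize (A ** diag_mat (col_scaling A (Suc k)))"
    unfolding Suc.IH
    by (simp add: row_normalize_col_normalize_row_normalize row_sum_pos mult_diag_mat_pos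
        assms col_scaling_pos less_imp_neq[symmetric])
  finally show ?case .
qed

lemma col_normalize_id: "(\<And>j. col_sum A j = 1) \<Longrightarrow> col_normalize A = A"
  by (simp add: vec_eq_iff col_normalize_nth)

lemma tendsto_col_normalize:
  assumes "X \<longlonglongrightarrow> L" "\<And>j. col_sum L j \<noteq> 0"
  shows "(\<lambda>k. col_normalize (X k)) \<longlonglongrightarrow> col_normalize L"
proof (intro vec_tendstoI)
  fix i j
  have entries: "(\<lambda>k. X k $ i $ j) \<longlonglongrightarrow> L $ i $ j" for i j
    using assms(1) by (intro tendsto_vec_nth)
  then have "(\<lambda>k. col_sum (X k) j) \<longlonglongrightarrow> col_sum L j"
    unfolding col_sum_def by (intro tendsto_sum)
  then show "(\<lambda>k. col_normalize (X k) $ i $ j) \<longlonglongrightarrow> col_normalize L $ i $ j"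
    unfolding col_normalize_nth by (intro tendsto_divide entries assms(2))
qed

lemma alt_min_seq_tendstoI:
  assumes "(\<lambda>k. alt_min_seq A (2 * k)) \<longlonglongrightarrow> L" "\<And>j. col_sum L j = 1"
  shows "alt_min_seq A \<longlonglongrightarrow> L"
proof (rule limseq_even_odd[OF assms(1)])
  show "(\<lambda>k. alt_min_seq A (2 * k + 1)) \<longlonglongrightarrow> L"
    unfolding alt_min_seq_Suc_even
    using tendsto_col_normalize[OF assms(1)] assms(2) by (simp add: col_normalize_id)
qed

lemma mobius_iterates_tendsto:
  fixes \<beta> \<gamma> s :: real and r :: "nat \<Rightarrow> real"
  assumes "\<beta> > 0" "\<gamma> > 0" "s > 0" "\<And>k. r k > 0"
    and r_Suc: "\<And>k. r (Suc k) = (\<gamma> * s^2 + \<beta> * r k) / (\<beta> + \<gamma> * r k)"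
  shows "r \<longlonglongrightarrow> s"
proof -
  define \<kappa> where "\<kappa> = (\<beta> - \<gamma> * s) / (\<beta> + \<gamma> * s)"
  define w where "w k = (r k - s) / (r k + s)" for k
  have "w (Suc k) = \<kappa> * w k" for k
  proof -
    have D: "\<beta> + \<gamma> * r k > 0" "r k + s > 0" "\<beta> + \<gamma> * s > 0"
      using assms(1-4) by (auto intro: add_pos_pos)
    have "r (Suc k) - s = (r k - s) * (\<beta> - \<gamma> * s) / (\<beta> + \<gamma> * r k)"
      "r (Suc k) + s = (r k + s) * (\<beta> + \<gamma> * s) / (\<beta> + \<gamma> * r k)"
      unfolding r_Suc using D by (simp_all add: field_simps power2_eq_square)
    then show ?thesis
      using D by (simp add: w_def \<kappa>_def ac_simps)
  qed
  then have w_eq: "w = (\<lambda>k. \<kappa> ^ k * w 0)"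
  proof (intro ext)
    show "w k = \<kappa> ^ k * w 0" for k
      using \<open>\<And>k. w (Suc k) = \<kappa> * w k\<close> by (induction k) simp_all
  qed
  have "\<bar>\<kappa>\<bar> < 1"
  proof -
    have "\<gamma> * s > 0"
      using assms(2,3) by simp
    then have "\<bar>\<beta> - \<gamma> * s\<bar> < \<beta> + \<gamma> * s"
      using assms(1) by (simp add: abs_less_iff)
    then show ?thesis
      using \<open>\<gamma> * s > 0\<close> assms(1) by (simp add: \<kappa>_def)
  qed
  then have "(\<lambda>k. \<kappa> ^ k * w 0) \<longlonglongrightarrow> 0 * w 0"
    by (intro tendsto_mult LIMSEQ_power_zero tendsto_const) simp
  then have "w \<longlonglongrightarrow> 0"
    by (subst w_eq) simp
  have r_eq: "r = (\<lambda>k. s * (1 + w k) / (1 - w k))"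
  proof (intro ext)
    fix k
    have "r k + s > 0"
      using assms(3) assms(4)[of k] by simp
    then have "1 + w k = 2 * r k / (r k + s)" "1 - w k = 2 * s / (r k + s)"
      by (simp_all add: w_def field_simps)
    then show "r k = s * (1 + w k) / (1 - w k)"
      using assms(3) \<open>r k + s > 0\<close> by simp
  qed
  have "(\<lambda>k. s * (1 + w k) / (1 - w k)) \<longlonglongrightarrow> s * (1 + 0) / (1 - 0)"
    by (intro tendsto_intros \<open>w \<longlonglongrightarrow> 0\<close>) simp
  then show ?thesis
    by (subst r_eq) simp
qed

lemma mat2_nth [simp]:
  "mat2 a b c d $ 1 $ 1 = a" "mat2 a b c d $ 1 $ 2 = b"
  "mat2 a b c d $ 2 $ 1 = c" "mat2 a b c d $ 2 $ 2 = d"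
  by (simp_all add: mat2_def)

lemma mat2_pos: "a > 0 \<Longrightarrow> b > 0 \<Longrightarrow> c > 0 \<Longrightarrow> d > 0 \<Longrightarrow> mat2 a b c d $ i $ j > 0"
  using exhaust_2[of i] exhaust_2[of j] by auto

lemma tendsto_mat2:
  assumes "f \<longlonglongrightarrow> a" "g \<longlonglongrightarrow> b" "h \<longlonglongrightarrow> c" "k \<longlonglongrightarrow> d"
  shows "(\<lambda>n. mat2 (f n) (g n) (h n) (k n)) \<longlonglongrightarrow> mat2 a b c d"
proof (intro vec_tendstoI)
  fix i j :: 2
  show "(\<lambda>n. mat2 (f n) (g n) (h n) (k n) $ i $ j) \<longlonglongrightarrow> mat2 a b c d $ i $ j"
    using exhaust_2[of i] exhaust_2[of j] assms by auto
qed

definition row_normalized_mat2 :: "real \<Rightarrow> real \<Rightarrow> real \<Rightarrow> real \<Rightarrow> real \<Rightarrow> real^2^2" where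
  "row_normalized_mat2 a b c d r =
     mat2 (a / (a + b * r)) (b * r / (a + b * r)) (c / (c + d * r)) (d * r / (c + d * r))"

lemma row_normalize_mat2_mult_diag_mat:
  fixes a b c d :: real
  assumes "a > 0" "b > 0" "c > 0" "d > 0" "v 1 > 0" "v 2 > 0"
  shows "row_normalize (mat2 a b c d ** diag_mat v) = row_normalized_mat2 a b c d (v 2 / v 1)"
  using assms
  by (simp add: vec_eq_iff forall_2 row_normalize_nth row_sum_def sum_2 mult_diag_mat_nth
      row_normalized_mat2_def field_simps)

lemma col_sum_ratio_row_normalized_mat2:
  fixes a b c d r :: real
  assumes "a > 0" "b > 0" "c > 0" "d > 0" "r > 0"
  shows "r * col_sum (row_normalized_mat2 a b c d r) 1 / col_sum (row_normalized_mat2 a b c d r) 2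
    = (2 * a * c + (a * d + b * c) * r) / ((a * d + b * c) + 2 * b * d * r)"
proof -
  have D: "a + b * r > 0" "c + d * r > 0" "(a * d + b * c) + 2 * b * d * r > 0"
    using assms by (simp_all add: add_pos_pos)
  have "col_sum (row_normalized_mat2 a b c d r) 1
      = (2 * a * c + (a * d + b * c) * r) / ((a + b * r) * (c + d * r))"
    using D by (simp add: col_sum_def sum_2 row_normalized_mat2_def field_simps)
  moreover have "col_sum (row_normalized_mat2 a b c d r) 2
      = r * ((a * d + b * c) + 2 * b * d * r) / ((a + b * r) * (c + d * r))"
    using D by (simp add: col_sum_def sum_2 row_normalized_mat2_def field_simps)
  ultimately show ?thesis
    using D assms(5) by simp
qed

lemma row_normalized_mat2_balanced:
  fixes a b c d :: real
  assumes "a > 0" "b > 0" "c > 0" "d > 0"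
  defines "t \<equiv> sqrt (a * d / (b * c))"
  shows "row_normalized_mat2 a b c d (a / (b * t)) = mat2 (t / (1 + t)) (1 / (1 + t)) (1 / (1 + t)) (t / (1 + t))"
proof -
  have "t > 0" "t^2 = a * d / (b * c)"
    using assms(1-4) by (simp_all add: t_def)
  then have "a * d = b * c * t^2"
    using assms(2,3) by (simp add: field_simps)
  then have "d * (a / (b * t)) = c * t"
    using assms(2) \<open>t > 0\<close> by (simp add: field_simps power2_eq_square)
  moreover have "b * (a / (b * t)) = a / t"
    using assms(2) by simp
  moreover have "a + a / t = a * (1 + t) / t" "c + c * t = c * (1 + t)"
    using \<open>t > 0\<close> by (simp_all add: field_simps)
  ultimately show ?thesis
    using assms(1,3) \<open>t > 0\<close> by (simp add: row_normalized_mat2_def)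
qed

definition col_weight_ratio :: "real^2^2 \<Rightarrow> nat \<Rightarrow> real" where
  "col_weight_ratio A k = col_scaling A k 2 / col_scaling A k 1"

lemma row_normalize_mat2_col_scaling:
  fixes a b c d :: real
  assumes "a > 0" "b > 0" "c > 0" "d > 0"
  defines "A \<equiv> mat2 a b c d"
  shows "row_normalize (A ** diag_mat (col_scaling A k))
    = row_normalized_mat2 a b c d (col_weight_ratio A k)"
  unfolding A_def col_weight_ratio_def
  by (intro row_normalize_mat2_mult_diag_mat assms col_scaling_pos mat2_pos)

lemma col_weight_ratio_Suc:
  fixes a b c d :: real
  assumes "a > 0" "b > 0" "c > 0" "d > 0"
  defines "A \<equiv> mat2 a b c d"
  shows "col_weight_ratio A (Suc k)
    = (2 * a * c + (a * d + b * c) * col_weight_ratio A k)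
      / ((a * d + b * c) + 2 * b * d * col_weight_ratio A k)"
proof -
  let ?C = "col_sum (row_normalize (A ** diag_mat (col_scaling A k)))"
  have v_pos: "col_scaling A k j > 0" for j
    unfolding A_def by (intro col_scaling_pos mat2_pos assms)
  moreover have "?C j > 0" for j
    unfolding A_def by (intro col_sum_pos row_normalize_pos mult_diag_mat_pos mat2_pos assms v_pos[unfolded A_def])
  ultimately have "col_weight_ratio A (Suc k) = col_weight_ratio A k * ?C 1 / ?C 2"
    by (simp add: col_weight_ratio_def field_simps)
  moreover have "col_weight_ratio A k > 0"
    using v_pos by (simp add: col_weight_ratio_def)
  ultimately show ?thesis
    unfolding A_def row_normalize_mat2_col_scaling[OF assms(1-4)]
    by (simp add: col_sum_ratio_row_normalized_mat2[OF assms(1-4)])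
qed

lemma col_weight_ratio_tendsto:
  fixes a b c d :: real
  assumes "a > 0" "b > 0" "c > 0" "d > 0"
  defines "t \<equiv> sqrt (a * d / (b * c))"
  shows "col_weight_ratio (mat2 a b c d) \<longlonglongrightarrow> a / (b * t)"
proof (rule mobius_iterates_tendsto)
  have "t > 0" "t^2 = a * d / (b * c)"
    using assms(1-4) by (simp_all add: t_def)
  then have "2 * b * d * (a / (b * t))^2 = 2 * a * c"
    using assms(1-4) by (simp add: field_simps power2_eq_square)
  then show "col_weight_ratio (mat2 a b c d) (Suc k)
    = (2 * b * d * (a / (b * t))^2 + (a * d + b * c) * col_weight_ratio (mat2 a b c d) k)
      / ((a * d + b * c) + 2 * b * d * col_weight_ratio (mat2 a b c d) k)" for k
    using col_weight_ratio_Suc[OF assms(1-4)] by simp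
  show "a / (b * t) > 0"
    using assms(1,2) \<open>t > 0\<close> by simp
  show "col_weight_ratio (mat2 a b c d) k > 0" for k
    using assms by (simp add: col_weight_ratio_def col_scaling_pos mat2_pos)
qed (use assms in \<open>simp_all add: add_pos_pos\<close>)

lemma alt_min_seq_mat2_tendsto:
  fixes a b c d :: real
  assumes "a > 0" "b > 0" "c > 0" "d > 0"
  defines "t \<equiv> sqrt (a * d / (b * c))"
  shows "alt_min_seq (mat2 a b c d)
    \<longlonglongrightarrow> mat2 (t / (1 + t)) (1 / (1 + t)) (1 / (1 + t)) (t / (1 + t))"
proof -
  define A where "A = mat2 a b c d"
  define L where "L = mat2 (t / (1 + t)) (1 / (1 + t)) (1 / (1 + t)) (t / (1 + t))"
  define s where "s = a / (b * t)"
  have "t > 0"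
    using assms(1-4) by (simp add: t_def)
  then have "a + b * s > 0" "c + d * s > 0"
    using assms(1-4) by (simp_all add: s_def add_pos_pos)
  then have "(\<lambda>k. row_normalized_mat2 a b c d (col_weight_ratio A k)) \<longlonglongrightarrow> row_normalized_mat2 a b c d s"
    unfolding row_normalized_mat2_def A_def s_def t_def
    by (intro tendsto_mat2 tendsto_intros col_weight_ratio_tendsto assms) (auto simp: s_def t_def)
  moreover have "row_normalized_mat2 a b c d s = L"
    unfolding s_def t_def L_def by (rule row_normalized_mat2_balanced[OF assms(1-4)])
  ultimately have "(\<lambda>k. alt_min_seq A (2 * Suc k)) \<longlonglongrightarrow> L"
    unfolding A_def
    by (simp only: mult_Suc_right add.commute[of 2] alt_min_seq_even_col_scaling[OF mat2_pos[OF assms(1-4)]]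
        row_normalize_mat2_col_scaling[OF assms(1-4)])
  then have "(\<lambda>k. alt_min_seq A (2 * k)) \<longlonglongrightarrow> L"
    using LIMSEQ_imp_Suc[of "\<lambda>k. alt_min_seq A (2 * k)" L] by blast
  moreover have "col_sum L j = 1" for j
    using exhaust_2[of j] \<open>t > 0\<close> by (auto simp: L_def col_sum_def sum_2 field_simps)
  ultimately show ?thesis
    unfolding A_def L_def by (rule alt_min_seq_tendstoI)
qed

lemma sqrt_in_Rats_iff:
  assumes "x \<ge> 0"
  shows "sqrt x \<in> \<rat> \<longleftrightarrow> (\<exists>q\<in>\<rat>. x = q^2)"
proof
  assume "sqrt x \<in> \<rat>"
  then show "\<exists>q\<in>\<rat>. x = q^2"
    using assms by (intro bexI[of _ "sqrt x"]) simp_all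
next
  assume "\<exists>q\<in>\<rat>. x = q^2"
  then obtain q where "q \<in> \<rat>" "x = q^2"
    by blast
  then show "sqrt x \<in> \<rat>"
    by simp
qed

lemma inverse_one_plus_in_Rats_iff:
  fixes t :: real
  assumes "t \<ge> 0"
  shows "1 / (1 + t) \<in> \<rat> \<longleftrightarrow> t \<in> \<rat>"
proof
  assume "1 / (1 + t) \<in> \<rat>"
  then have "1 / (1 / (1 + t)) - 1 \<in> \<rat>"
    by (metis Rats_1 Rats_diff Rats_divide)
  then show "t \<in> \<rat>"
    using assms by simp
qed (auto intro: Rats_divide Rats_add)

theorem corollary5:
  fixes a b c d :: real
  assumes "a \<in> \<rat>" "b \<in> \<rat>" "c \<in> \<rat>" "d \<in> \<rat>"
    and "a > 0" "b > 0" "c > 0" "d > 0"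
  shows "(\<forall>i j. alt_min_limit (mat2 a b c d) $ i $ j \<in> \<rat>)
     \<longleftrightarrow> (\<exists>q\<in>\<rat>. a * d / (b * c) = q ^ 2)"
proof -
  define t where "t = sqrt (a * d / (b * c))"
  have "a * d / (b * c) \<ge> 0" "t \<ge> 0"
    using assms(5-8) by (simp_all add: t_def)
  have "alt_min_limit (mat2 a b c d) = mat2 (t / (1 + t)) (1 / (1 + t)) (1 / (1 + t)) (t / (1 + t))"
    unfolding alt_min_limit_def t_def by (rule limI) (rule alt_min_seq_mat2_tendsto[OF assms(5-8)])
  then have "(\<forall>i j. alt_min_limit (mat2 a b c d) $ i $ j \<in> \<rat>) \<longleftrightarrow> t / (1 + t) \<in> \<rat> \<and> 1 / (1 + t) \<in> \<rat>"
    by (auto simp: forall_2)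
  also have "\<dots> \<longleftrightarrow> 1 / (1 + t) \<in> \<rat>"
    using \<open>t \<ge> 0\<close> by (auto simp: inverse_one_plus_in_Rats_iff)
  also have "\<dots> \<longleftrightarrow> (\<exists>q\<in>\<rat>. a * d / (b * c) = q ^ 2)"
    using \<open>t \<ge> 0\<close> \<open>a * d / (b * c) \<ge> 0\<close>
    by (simp add: inverse_one_plus_in_Rats_iff t_def sqrt_in_Rats_iff)
  finally show ?thesis .
qed

end
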